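(* Let $\mathbb W$, $\mathbb W_i$ and $C$ be as in the context. An automorphism $\theta\in\operatorname{Aut}(\mathbb W)$ lies in $C$ if and only if $\theta(\mathbb W_i)=\mathbb W_i$ for every $2\le i\le n$.
   Context: Fix an integer $n\ge 3$, pairwise distinct odd integers $m_1,\dots,m_l\ge 3$ and positive integers $k_1,\dots,k_l$ with $k_1+\cdots+k_l=n-1$. Partition $\{2,\dots,n\}$ into consecutive blocks $A_1=\{2,\dots,k_1+1\}$, $A_2=\{k_1+2,\dots,k_1+k_2+1\}$, …, $A_l$ (of sizes $k_1,\dots,k_l$), and put $t_i=m_j$ for $i\in A_j$. The star group is $\mathbb W=\langle w_1,\dots,w_n\mid w_j^2=1\ (1\le j\le n),\ (w_1w_i)^{t_i}=1\ (2\le i\le n)\rangle$. For $2\le i\le n$ let $\mathbb W_i=\langle w_1,w_i\rangle$ (dihedral of order $2t_i$). For $2\le i\le n$ and $1\le k<t_i$ with $\gcd(k,t_i)=1$, $\theta_i^k$ is the automorphism of $\mathbb W$ with $\theta_i^k(w_j)=w_j$ for $j\ne i$ and $\theta_i^k(w_i)=w_1(w_1w_i)^k$. Let $C_i=\langle\theta_i^k : 1\le k<t_i,\ \gcd(k,t_i)=1\rangle\cong \operatorname{U}_{t_i}$ (the unit group of $\mathbb Z/t_i\mathbb Z$) and $C=C_2\times C_3\times\cdots\times C_n\le\operatorname{Aut}(\mathbb W)$, an abelian subgroup isomorphic to $\prod_{j=1}^l(\operatorname{U}_{m_j})^{k_j}$. *)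

theory Defs
  imports "HOL-Algebra.Algebra"
begin

text \<open>Words over the generator indices 1..n; star_rel n t is the congruence on words
  generated by the defining relations w_j w_j = 1 (1 <= j <= n) and (w_1 w_i)^(t i) = 1
  (2 <= i <= n).\<close>

inductive star_rel :: "nat \<Rightarrow> (nat \<Rightarrow> nat) \<Rightarrow> nat list \<Rightarrow> nat list \<Rightarrow> bool"
  for n :: nat and t :: "nat \<Rightarrow> nat" where
  refl: "star_rel n t u u"
| sym: "star_rel n t u v \<Longrightarrow> star_rel n t v u"
| trans: "star_rel n t u v \<Longrightarrow> star_rel n t v w \<Longrightarrow> star_rel n t u w"
| cong: "star_rel n t u v \<Longrightarrow> star_rel n t (a @ u @ b) (a @ v @ b)"
| invol: "j \<in> {1..n} \<Longrightarrow> star_rel n t [j, j] []"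
| braid: "i \<in> {2..n} \<Longrightarrow> star_rel n t (concat (replicate (t i) [1, i])) []"

definition star_eqv :: "nat \<Rightarrow> (nat \<Rightarrow> nat) \<Rightarrow> (nat list \<times> nat list) set" where
  "star_eqv n t = {(u, v). u \<in> lists {1..n} \<and> v \<in> lists {1..n} \<and> star_rel n t u v}"

definition star_group :: "nat \<Rightarrow> (nat \<Rightarrow> nat) \<Rightarrow> nat list set monoid" where
  "star_group n t =
    \<lparr> carrier = lists {1..n} // star_eqv n t,
      monoid.mult = (\<lambda>P Q. (\<Union>x\<in>P. (\<Union>y\<in>Q. (star_eqv n t) `` {x @ y}))),
      monoid.one = star_eqv n t `` {[]} \<rparr>"

definition star_gen :: "nat \<Rightarrow> (nat \<Rightarrow> nat) \<Rightarrow> nat \<Rightarrow> nat list set" where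
  "star_gen n t j = star_eqv n t `` {[j]}"

definition star_Wi :: "nat \<Rightarrow> (nat \<Rightarrow> nat) \<Rightarrow> nat \<Rightarrow> nat list set set" where
  "star_Wi n t i = generate (star_group n t) {star_gen n t 1, star_gen n t i}"

definition star_thetas :: "nat \<Rightarrow> (nat \<Rightarrow> nat) \<Rightarrow> (nat list set \<Rightarrow> nat list set) set" where
  "star_thetas n t = {\<theta> \<in> auto (star_group n t). \<exists>i\<in>{2..n}. \<exists>k::nat.
      1 \<le> k \<and> k < t i \<and> coprime k (t i) \<and>
      (\<forall>j\<in>{1..n}. j \<noteq> i \<longrightarrow> \<theta> (star_gen n t j) = star_gen n t j) \<and>
      \<theta> (star_gen n t i) =
        star_gen n t 1 \<otimes>\<^bsub>star_group n t\<^esub>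
        ((star_gen n t 1 \<otimes>\<^bsub>star_group n t\<^esub> star_gen n t i) [^]\<^bsub>star_group n t\<^esub> k)}"

definition star_C :: "nat \<Rightarrow> (nat \<Rightarrow> nat) \<Rightarrow> (nat list set \<Rightarrow> nat list set) set" where
  "star_C n t = generate (AutoGroup (star_group n t)) (star_thetas n t)"

end

(*
  Mapping words to the affine maps x \<mapsto> \<plusminus>x + b of \<int> (w\<^sub>i acting as x \<mapsto> -x - 1, all other
  generators as x \<mapsto> -x) and reading the translation part modulo t\<^sub>i shows that
  W\<^sub>i = \<langle>w\<^sub>1, w\<^sub>i\<rangle> is dihedral of order 2 t\<^sub>i, with normal forms w\<^sub>1\<^sup>e (w\<^sub>1 w\<^sub>i)\<^sup>a, and that
  W\<^sub>i \<inter> W\<^sub>j = {1, w\<^sub>1} for i \<noteq> j. Each \<theta>\<^sub>i\<^sup>k exists by the universal property of the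
  presentation and maps every W\<^sub>j onto itself, hence so does all of C. Conversely, an
  automorphism \<theta> with \<theta>(W\<^sub>i) = W\<^sub>i for all i fixes w\<^sub>1 (it lies in W\<^sub>2 \<inter> W\<^sub>3) and sends w\<^sub>i to an
  involution of W\<^sub>i other than w\<^sub>1; as t\<^sub>i is odd this is a reflection w\<^sub>1 (w\<^sub>1 w\<^sub>i)\<^sup>k, and
  surjectivity onto W\<^sub>i makes k a unit modulo t\<^sub>i. So \<theta> agrees on the generators with the
  product of the \<theta>\<^sub>i\<^sup>k, which lies in C.
*)

theory Submission
  imports Defs "HOL-Number_Theory.Cong"
begin

declare One_nat_def [simp del] \<comment> \<open>keeps the generator index \<open>1\<close> from turning into \<open>Suc 0\<close>\<close>

lemma (in group) subgroup_auto_stabilizer: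
  assumes "S \<subseteq> carrier G"
  shows "subgroup {h \<in> auto G. h ` S = S} (AutoGroup G)"
proof -
  interpret A: group "AutoGroup G" by (rule AutoGroup)
  have carrier_A: "carrier (AutoGroup G) = auto G" by (simp add: AutoGroup_def BijGroup_def)
  have mult_A: "h \<otimes>\<^bsub>AutoGroup G\<^esub> h' = compose (carrier G) h h'" if "h \<in> auto G" "h' \<in> auto G" for h h'
    using that by (simp add: AutoGroup_def BijGroup_def auto_def)
  have inv_A: "inv\<^bsub>AutoGroup G\<^esub> h = restrict (inv_into (carrier G) h) (carrier G)" if "h \<in> auto G" for h
    using group.m_inv_consistent[OF group_BijGroup subgroup_auto that] that
    by (simp add: AutoGroup_def inv_BijGroup auto_def)
  show ?thesis
  proof (rule subgroup.intro)
    fix h h' assume "h \<in> {h \<in> auto G. h ` S = S}" "h' \<in> {h \<in> auto G. h ` S = S}"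
    moreover have "compose (carrier G) h h' ` S = h ` h' ` S" using assms by (auto simp: compose_def)
    ultimately show "h \<otimes>\<^bsub>AutoGroup G\<^esub> h' \<in> {h \<in> auto G. h ` S = S}"
      using A.m_closed by (simp add: carrier_A mult_A)
  next
    show "\<one>\<^bsub>AutoGroup G\<^esub> \<in> {h \<in> auto G. h ` S = S}"
      using assms id_in_auto by (auto simp: AutoGroup_def BijGroup_def)
  next
    fix h assume h: "h \<in> {h \<in> auto G. h ` S = S}"
    then have "inj_on h (carrier G)" by (simp add: auto_def Bij_def bij_betw_def)
    then have "inv_into (carrier G) h ` (h ` S) = S" by (rule inv_into_image_cancel[OF _ assms])
    then have "inv_into (carrier G) h ` S = S" using h by simp
    moreover have "restrict (inv_into (carrier G) h) (carrier G) ` S = inv_into (carrier G) h ` S"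
      using assms by (intro image_cong) auto
    ultimately have "restrict (inv_into (carrier G) h) (carrier G) ` S = S" by simp
    then show "inv\<^bsub>AutoGroup G\<^esub> h \<in> {h \<in> auto G. h ` S = S}"
      using h A.inv_closed by (simp add: carrier_A inv_A)
  qed (auto simp: carrier_A)
qed

section \<open>A dihedral invariant of words\<close>

text \<open>A pair \<open>(a, b)\<close> stands for the affine map \<open>x \<mapsto> a * x + b\<close> of \<open>\<int>\<close>.\<close>

definition aff_comp :: "int \<times> int \<Rightarrow> int \<times> int \<Rightarrow> int \<times> int" where
  "aff_comp f g = (fst f * fst g, fst f * snd g + snd f)"

text \<open>Here \<open>w\<^sub>1 w\<^sub>i\<close> acts as the translation by one, so modulo \<open>t i\<close> all defining relations
  are respected.\<close>

fun refl_word :: "nat \<Rightarrow> nat list \<Rightarrow> int \<times> int" where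
  "refl_word i [] = (1, 0)"
| "refl_word i (j # w) = aff_comp (if j = i then (-1, -1) else (-1, 0)) (refl_word i w)"

lemma refl_word_append: "refl_word i (u @ v) = aff_comp (refl_word i u) (refl_word i v)"
  by (induct u) (auto simp: aff_comp_def algebra_simps)

lemma refl_word_power:
  "i \<noteq> 1 \<Longrightarrow> refl_word i (concat (replicate a [1, j])) = (1, if j = i then int a else 0)"
  by (induct a) (auto simp: aff_comp_def refl_word_append)

lemma star_rel_refl_word:
  assumes "star_rel n t u v" "i \<noteq> 1"
  shows "fst (refl_word i u) = fst (refl_word i v) \<and>
    int (t i) dvd snd (refl_word i u) - snd (refl_word i v)"
  using assms
proof (induction rule: star_rel.induct)
  case (sym u v)
  then show ?case by (metis dvd_minus_iff minus_diff_eq)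
next
  case (trans u v w)
  then show ?case by (metis diff_add_cancel add_diff_eq dvd_add)
next
  case (cong u v a b)
  then have "snd (refl_word i (a @ u @ b)) - snd (refl_word i (a @ v @ b))
      = fst (refl_word i a) * (snd (refl_word i u) - snd (refl_word i v))"
    by (simp add: refl_word_append aff_comp_def algebra_simps)
  with cong show ?case by (simp add: refl_word_append aff_comp_def)
next
  case (braid j)
  then show ?case by (simp add: refl_word_power)
qed (auto simp: aff_comp_def)

locale star_presentation =
  fixes n :: nat and t :: "nat \<Rightarrow> nat"
begin

abbreviation "G \<equiv> star_group n t"
abbreviation "gen \<equiv> star_gen n t"
abbreviation "L \<equiv> lists {1..n}"

definition cls :: "nat list \<Rightarrow> nat list set" where
  "cls w = star_eqv n t `` {w}"

lemma star_rel_append: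
  assumes "star_rel n t u u'" "star_rel n t v v'" shows "star_rel n t (u @ v) (u' @ v')"
proof -
  have "star_rel n t ([] @ u @ v) ([] @ u' @ v)" by (rule star_rel.cong[OF assms(1)])
  moreover have "star_rel n t (u' @ v @ []) (u' @ v' @ [])" by (rule star_rel.cong[OF assms(2)])
  ultimately show ?thesis by (auto intro: star_rel.trans)
qed

lemma equiv_star_eqv: "equiv L (star_eqv n t)"
  unfolding equiv_def refl_on_def sym_def trans_def star_eqv_def
  by (auto intro: star_rel.refl star_rel.sym star_rel.trans)

lemma cls_eq_iff: "u \<in> L \<Longrightarrow> v \<in> L \<Longrightarrow> cls u = cls v \<longleftrightarrow> star_rel n t u v"
  using equiv_class_eq_iff[OF equiv_star_eqv, of u v] unfolding cls_def star_eqv_def by auto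

lemma mem_cls_iff: "u \<in> L \<Longrightarrow> v \<in> cls u \<longleftrightarrow> v \<in> L \<and> star_rel n t u v"
  unfolding cls_def star_eqv_def by auto

lemma carrier_star_group: "carrier G = cls ` L"
  unfolding star_group_def quotient_def cls_def by auto

lemma cls_in_carrier: "w \<in> L \<Longrightarrow> cls w \<in> carrier G"
  by (simp add: carrier_star_group)

lemma cls_mult: assumes "u \<in> L" "v \<in> L" shows "cls u \<otimes>\<^bsub>G\<^esub> cls v = cls (u @ v)"
proof -
  have "star_eqv n t `` {x @ y} = cls (u @ v)" if "x \<in> cls u" "y \<in> cls v" for x y
  proof -
    from that assms have "x \<in> L" "y \<in> L" "star_rel n t (u @ v) (x @ y)"
      by (auto simp: mem_cls_iff intro: star_rel_append)
    with assms show ?thesis by (simp add: cls_eq_iff star_rel.sym flip: cls_def)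
  qed
  moreover have "u \<in> cls u" "v \<in> cls v" using assms by (auto simp: mem_cls_iff star_rel.refl)
  ultimately show ?thesis unfolding star_group_def by auto
qed

lemma one_star_group: "\<one>\<^bsub>G\<^esub> = cls []"
  by (simp add: star_group_def cls_def)

lemma star_rel_rev_append: "w \<in> L \<Longrightarrow> star_rel n t (rev w @ w) []"
proof (induction w)
  case (Cons a w)
  then have "star_rel n t (rev w @ [a, a] @ w) (rev w @ [] @ w)"
    by (intro star_rel.cong star_rel.invol) auto
  with Cons show ?case by (auto intro: star_rel.trans)
qed (simp add: star_rel.refl)

lemma group_star_group: "group G"
proof (rule groupI)
  fix x y z assume "x \<in> carrier G" "y \<in> carrier G" "z \<in> carrier G"
  then obtain u v w where "u \<in> L" "v \<in> L" "w \<in> L" "x = cls u" "y = cls v" "z = cls w"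
    by (auto simp: carrier_star_group)
  then show "x \<otimes>\<^bsub>G\<^esub> y \<in> carrier G" "x \<otimes>\<^bsub>G\<^esub> y \<otimes>\<^bsub>G\<^esub> z = x \<otimes>\<^bsub>G\<^esub> (y \<otimes>\<^bsub>G\<^esub> z)"
    "\<one>\<^bsub>G\<^esub> \<otimes>\<^bsub>G\<^esub> x = x"
    by (simp_all add: cls_mult cls_in_carrier one_star_group)
  have "rev u \<in> L" using \<open>u \<in> L\<close> by auto
  with \<open>u \<in> L\<close> have "cls (rev u) \<otimes>\<^bsub>G\<^esub> x = \<one>\<^bsub>G\<^esub>"
    by (simp add: \<open>x = cls u\<close> cls_mult one_star_group cls_eq_iff star_rel_rev_append)
  with \<open>rev u \<in> L\<close> show "\<exists>y\<in>carrier G. y \<otimes>\<^bsub>G\<^esub> x = \<one>\<^bsub>G\<^esub>" by (blast intro: cls_in_carrier)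
qed (simp add: one_star_group cls_in_carrier)

sublocale group G by (rule group_star_group)

lemma gen_eq_cls: "gen j = cls [j]"
  by (simp add: star_gen_def cls_def)

lemma gen_closed: "j \<in> {1..n} \<Longrightarrow> gen j \<in> carrier G"
  by (simp add: gen_eq_cls cls_in_carrier)

lemma gen_mult_self: "j \<in> {1..n} \<Longrightarrow> gen j \<otimes>\<^bsub>G\<^esub> gen j = \<one>\<^bsub>G\<^esub>"
  by (simp add: gen_eq_cls cls_mult one_star_group cls_eq_iff star_rel.invol)

lemma inv_gen: "j \<in> {1..n} \<Longrightarrow> inv\<^bsub>G\<^esub> gen j = gen j"
  by (simp add: gen_mult_self gen_closed inv_char)

lemma concat_replicate_in_lists: "w \<in> L \<Longrightarrow> concat (replicate a w) \<in> L"
  by (induct a) auto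

lemma cls_power: "w \<in> L \<Longrightarrow> cls w [^]\<^bsub>G\<^esub> (a::nat) = cls (concat (replicate a w))"
proof (induction a)
  case (Suc a)
  have "concat (replicate a w) \<in> L" using Suc.prems by (rule concat_replicate_in_lists)
  moreover have "cls w [^]\<^bsub>G\<^esub> Suc a = cls w \<otimes>\<^bsub>G\<^esub> cls w [^]\<^bsub>G\<^esub> a"
    by (rule nat_pow_Suc2[OF cls_in_carrier[OF Suc.prems]])
  ultimately show ?case using Suc by (simp add: cls_mult)
qed (simp add: one_star_group)

lemma gen_1_mult_gen_power:
  assumes "i \<in> {1..n}"
  shows "(gen 1 \<otimes>\<^bsub>G\<^esub> gen i) [^]\<^bsub>G\<^esub> (a::nat) = cls (concat (replicate a [1, i]))"
  using assms by (simp add: gen_eq_cls cls_mult cls_power)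

lemma gen_1_mult_gen_power_order:
  assumes "i \<in> {2..n}" shows "(gen 1 \<otimes>\<^bsub>G\<^esub> gen i) [^]\<^bsub>G\<^esub> t i = \<one>\<^bsub>G\<^esub>"
proof -
  have "[1, i] \<in> L" using assms by auto
  then show ?thesis
    using assms by (simp add: gen_1_mult_gen_power one_star_group cls_eq_iff
        concat_replicate_in_lists star_rel.braid)
qed


section \<open>The universal property of the presentation\<close>

text \<open>Letters outside \<open>{1..n}\<close> are sent to \<open>\<one>\<close>, so that \<open>eval_word\<close> respects
  \<open>star_rel\<close> even on words containing them.\<close>

definition eval_word :: "('b, 'c) monoid_scheme \<Rightarrow> (nat \<Rightarrow> 'b) \<Rightarrow> nat list \<Rightarrow> 'b" where
  "eval_word H f w = foldr (\<lambda>j x. (if j \<in> {1..n} then f j else \<one>\<^bsub>H\<^esub>) \<otimes>\<^bsub>H\<^esub> x) w \<one>\<^bsub>H\<^esub>"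

definition satisfies_star_relations :: "('b, 'c) monoid_scheme \<Rightarrow> (nat \<Rightarrow> 'b) \<Rightarrow> bool" where
  "satisfies_star_relations H f \<longleftrightarrow>
    (\<forall>j\<in>{1..n}. f j \<in> carrier H \<and> f j \<otimes>\<^bsub>H\<^esub> f j = \<one>\<^bsub>H\<^esub>) \<and>
    (\<forall>i\<in>{2..n}. (f 1 \<otimes>\<^bsub>H\<^esub> f i) [^]\<^bsub>H\<^esub> t i = \<one>\<^bsub>H\<^esub>)"

definition star_lift :: "('b, 'c) monoid_scheme \<Rightarrow> (nat \<Rightarrow> 'b) \<Rightarrow> nat list set \<Rightarrow> 'b" where
  "star_lift H f = (\<lambda>x\<in>carrier G. eval_word H f (SOME w. w \<in> x))"

context
  fixes H :: "('b, 'c) monoid_scheme" and f :: "nat \<Rightarrow> 'b"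
  assumes H: "group H" and f: "satisfies_star_relations H f"
begin

interpretation H: group H by (rule H)

lemma eval_word_closed: "eval_word H f w \<in> carrier H"
  using f by (induct w) (auto simp: eval_word_def satisfies_star_relations_def)

lemma eval_word_Nil: "eval_word H f [] = \<one>\<^bsub>H\<^esub>"
  by (simp add: eval_word_def)

lemma eval_word_Cons: "eval_word H f (j # w) = (if j \<in> {1..n} then f j else \<one>\<^bsub>H\<^esub>) \<otimes>\<^bsub>H\<^esub> eval_word H f w"
  by (simp add: eval_word_def)

lemma eval_word_append: "eval_word H f (u @ v) = eval_word H f u \<otimes>\<^bsub>H\<^esub> eval_word H f v"
proof (induct u)
  case Nil
  then show ?case by (simp add: eval_word_Nil eval_word_closed)
next
  case (Cons j u)
  have "(if j \<in> {1..n} then f j else \<one>\<^bsub>H\<^esub>) \<in> carrier H"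
    using f by (simp add: satisfies_star_relations_def)
  with Cons show ?case by (simp add: eval_word_Cons eval_word_closed H.m_assoc)
qed

lemma eval_word_power:
  assumes "i \<in> {2..n}"
  shows "eval_word H f (concat (replicate a [1, i])) = (f 1 \<otimes>\<^bsub>H\<^esub> f i) [^]\<^bsub>H\<^esub> a"
proof (induction a)
  case 0
  then show ?case by (simp add: eval_word_Nil)
next
  case (Suc a)
  have "f 1 \<in> carrier H" "f i \<in> carrier H" and "eval_word H f [1, i] = f 1 \<otimes>\<^bsub>H\<^esub> f i"
    using assms f by (auto simp: satisfies_star_relations_def eval_word_def)
  moreover have "concat (replicate (Suc a) [1, i]) = [1, i] @ concat (replicate a [1, i])" by simp
  ultimately show ?case
    using Suc by (simp only: eval_word_append H.nat_pow_Suc2 H.m_closed)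
qed

lemma eval_word_star_rel: "star_rel n t u v \<Longrightarrow> eval_word H f u = eval_word H f v"
proof (induction rule: star_rel.induct)
  case (cong u v a b)
  then show ?case by (simp add: eval_word_append)
next
  case (invol j)
  then show ?case using f by (simp add: eval_word_def satisfies_star_relations_def)
next
  case (braid i)
  then show ?case using f by (simp add: eval_word_power eval_word_Nil satisfies_star_relations_def)
qed auto

lemma star_lift_cls: "w \<in> L \<Longrightarrow> star_lift H f (cls w) = eval_word H f w"
proof -
  assume w: "w \<in> L"
  then have "w \<in> cls w" by (simp add: mem_cls_iff star_rel.refl)
  then have "(SOME x. x \<in> cls w) \<in> cls w" by (rule someI)
  with w have "eval_word H f w = eval_word H f (SOME x. x \<in> cls w)"
    by (intro eval_word_star_rel) (simp add: mem_cls_iff)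
  with w show ?thesis by (simp add: star_lift_def cls_in_carrier)
qed

lemma star_lift_hom: "star_lift H f \<in> hom G H"
proof (rule homI)
  fix x y assume "x \<in> carrier G" "y \<in> carrier G"
  then obtain u v where "u \<in> L" "v \<in> L" "x = cls u" "y = cls v" by (auto simp: carrier_star_group)
  then show "star_lift H f x \<in> carrier H" "star_lift H f (x \<otimes>\<^bsub>G\<^esub> y) = star_lift H f x \<otimes>\<^bsub>H\<^esub> star_lift H f y"
    by (simp_all add: cls_mult star_lift_cls eval_word_append eval_word_closed)
qed

lemma star_lift_gen: "j \<in> {1..n} \<Longrightarrow> star_lift H f (gen j) = f j"
  using f by (simp add: gen_eq_cls star_lift_cls eval_word_def satisfies_star_relations_def)

end

lemma hom_eq_on_gens:
  assumes "group H" "h \<in> hom G H" "h' \<in> hom G H" "\<forall>j\<in>{1..n}. h (gen j) = h' (gen j)"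
    and "x \<in> carrier G"
  shows "h x = h' x"
proof -
  have "h (cls w) = h' (cls w)" if "w \<in> L" for w
    using that
  proof (induction w)
    case Nil
    then show ?case using assms(1-3) by (simp add: hom_one flip: one_star_group)
  next
    case (Cons j w)
    then have "cls (j # w) = gen j \<otimes>\<^bsub>G\<^esub> cls w" by (simp add: gen_eq_cls cls_mult)
    with Cons assms(2-4) show ?case by (simp add: hom_mult gen_closed cls_in_carrier)
  qed
  with assms(5) show ?thesis by (auto simp: carrier_star_group)
qed

abbreviation "rot i \<equiv> gen 1 \<otimes>\<^bsub>G\<^esub> gen i"

definition dih :: "nat \<Rightarrow> bool \<Rightarrow> nat \<Rightarrow> nat list set" where
  "dih i e a = (if e then gen 1 \<otimes>\<^bsub>G\<^esub> rot i [^]\<^bsub>G\<^esub> a else rot i [^]\<^bsub>G\<^esub> a)"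

definition dih_word :: "nat \<Rightarrow> bool \<Rightarrow> nat \<Rightarrow> nat list" where
  "dih_word i e a = (if e then [1] else []) @ concat (replicate a [1, i])"

lemma rot_closed: "i \<in> {1..n} \<Longrightarrow> rot i \<in> carrier G"
  by (simp add: gen_closed)

lemma dih_closed: "i \<in> {1..n} \<Longrightarrow> dih i e a \<in> carrier G"
  by (auto simp: dih_def gen_closed)

lemma cls_dih_word:
  assumes "i \<in> {1..n}" shows "cls (dih_word i e a) = dih i e a"
proof -
  have "[1] \<in> L" "[1, i] \<in> L" using assms by auto
  then show ?thesis unfolding dih_def gen_1_mult_gen_power[OF assms]
    by (simp add: dih_word_def gen_eq_cls cls_mult concat_replicate_in_lists)
qed

lemma refl_word_dih_word:
  assumes "i \<noteq> 1" "k \<noteq> 1"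
  shows "refl_word k (dih_word i e a) =
    (let x = if i = k then int a else 0 in if e then (-1, -x) else (1, x))"
  using assms by (simp add: dih_word_def refl_word_append refl_word_power aff_comp_def Let_def)

lemma dih_eq_imp_dvd:
  assumes "i \<in> {2..n}" "j \<in> {2..n}" "k \<noteq> 1" "dih i e a = dih j d b"
  shows "e = d \<and> int (t k) dvd (if i = k then int a else 0) - (if j = k then int b else 0)"
proof -
  have "dih_word i e a \<in> L" "dih_word j d b \<in> L"
    using assms(1,2) by (auto simp: dih_word_def concat_replicate_in_lists)
  moreover have "cls (dih_word i e a) = cls (dih_word j d b)"
    using assms by (simp add: cls_dih_word)
  ultimately have "star_rel n t (dih_word i e a) (dih_word j d b)" by (simp add: cls_eq_iff)
  from star_rel_refl_word[OF this assms(3)] have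
    "fst (refl_word k (dih_word i e a)) = fst (refl_word k (dih_word j d b))"
    "int (t k) dvd snd (refl_word k (dih_word i e a)) - snd (refl_word k (dih_word j d b))"
    by auto
  moreover have "i \<noteq> 1" "j \<noteq> 1" using assms(1,2) by auto
  ultimately show ?thesis
    using assms(3) by (cases e; cases d) (auto simp: refl_word_dih_word Let_def dvd_diff_commute)
qed

lemma rot_power_order: "i \<in> {2..n} \<Longrightarrow> rot i [^]\<^bsub>G\<^esub> (t i * q) = \<one>\<^bsub>G\<^esub>"
  by (simp add: gen_closed gen_1_mult_gen_power_order flip: nat_pow_pow)

lemma rot_power_cong:
  assumes "i \<in> {2..n}" "[a = b] (mod t i)"
  shows "rot i [^]\<^bsub>G\<^esub> a = rot i [^]\<^bsub>G\<^esub> b"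
proof -
  have "rot i [^]\<^bsub>G\<^esub> c = rot i [^]\<^bsub>G\<^esub> (c mod t i)" for c
  proof -
    have "rot i [^]\<^bsub>G\<^esub> c = rot i [^]\<^bsub>G\<^esub> (t i * (c div t i)) \<otimes>\<^bsub>G\<^esub> rot i [^]\<^bsub>G\<^esub> (c mod t i)"
      using assms(1) by (simp add: nat_pow_mult gen_closed)
    then show ?thesis using assms(1) by (simp add: rot_power_order gen_closed)
  qed
  with assms(2) show ?thesis by (metis cong_def)
qed

lemma dih_eq_iff:
  assumes "i \<in> {2..n}"
  shows "dih i e a = dih i d b \<longleftrightarrow> e = d \<and> [a = b] (mod t i)"
proof
  assume "dih i e a = dih i d b"
  moreover have "i \<noteq> 1" using assms by auto
  ultimately have "e = d \<and> int (t i) dvd int a - int b" using dih_eq_imp_dvd[OF assms assms] by force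
  then show "e = d \<and> [a = b] (mod t i)"
    by (simp add: cong_iff_dvd_diff flip: cong_int_iff)
next
  assume "e = d \<and> [a = b] (mod t i)"
  moreover from this have "rot i [^]\<^bsub>G\<^esub> a = rot i [^]\<^bsub>G\<^esub> b" using rot_power_cong[OF assms] by blast
  ultimately show "dih i e a = dih i d b" by (simp add: dih_def)
qed

lemma dih_eq_imp_dvd_other:
  assumes "i \<in> {2..n}" "j \<in> {2..n}" "i \<noteq> j" "dih i e a = dih j d b"
  shows "t i dvd a"
  using dih_eq_imp_dvd[OF assms(1,2) _ assms(4), of i] assms by auto

end

section \<open>The dihedral subgroups \<open>W i\<close>\<close>

locale odd_star_presentation = star_presentation +
  assumes three_le_n: "3 \<le> n"
    and odd_t: "i \<in> {2..n} \<Longrightarrow> odd (t i)"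
    and three_le_t: "i \<in> {2..n} \<Longrightarrow> 3 \<le> t i"
begin

abbreviation "W i \<equiv> star_Wi n t i"

lemma one_le_n [simp]: "1 \<le> n"
  using three_le_n by simp

lemma gen_1_closed: "gen 1 \<in> carrier G"
  by (simp add: gen_closed)

lemma subgroup_Wi: "i \<in> {1..n} \<Longrightarrow> subgroup (W i) G"
  unfolding star_Wi_def by (intro generate_is_subgroup) (simp add: gen_1_closed gen_closed)

lemma gen_1_in_Wi: "gen 1 \<in> W i"
  unfolding star_Wi_def by (rule generate.incl) simp

lemma gen_in_Wi: "gen i \<in> W i"
  unfolding star_Wi_def by (rule generate.incl) simp

lemma dih_in_Wi:
  assumes "i \<in> {1..n}" shows "dih i e a \<in> W i"
proof -
  have "rot i \<in> W i"
    using subgroup.m_closed[OF subgroup_Wi[OF assms] gen_1_in_Wi gen_in_Wi] .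
  then have "rot i [^]\<^bsub>G\<^esub> a \<in> W i"
    using subgroup_int_pow_closed[OF subgroup_Wi[OF assms], of _ "int a"] by (simp add: int_pow_int)
  then show ?thesis
    using subgroup.m_closed[OF subgroup_Wi[OF assms] gen_1_in_Wi] by (simp add: dih_def)
qed

lemma dih_rot_0: "dih i False 0 = \<one>\<^bsub>G\<^esub>"
  by (simp add: dih_def)

lemma dih_refl_0: "dih i True 0 = gen 1"
  by (simp add: dih_def gen_1_closed)

lemma dih_refl_1: "i \<in> {1..n} \<Longrightarrow> dih i True 1 = gen i"
  by (simp add: dih_def gen_1_closed gen_closed gen_mult_self flip: m_assoc)

lemma gen_1_mult_rot:
  "i \<in> {1..n} \<Longrightarrow> x \<in> carrier G \<Longrightarrow> gen 1 \<otimes>\<^bsub>G\<^esub> (rot i \<otimes>\<^bsub>G\<^esub> x) = gen i \<otimes>\<^bsub>G\<^esub> x"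
  by (simp add: gen_1_closed gen_closed gen_mult_self flip: m_assoc)

lemma gen_1_mult_dih: "i \<in> {1..n} \<Longrightarrow> gen 1 \<otimes>\<^bsub>G\<^esub> dih i e a = dih i (\<not> e) a"
  by (simp add: dih_def gen_1_closed gen_closed gen_mult_self flip: m_assoc)

lemma gen_mult_gen_1:
  assumes "i \<in> {2..n}" shows "gen i \<otimes>\<^bsub>G\<^esub> gen 1 = rot i [^]\<^bsub>G\<^esub> (t i - 1)"
proof -
  have closed: "gen 1 \<in> carrier G" "gen i \<in> carrier G" using assms by (auto simp: gen_1_closed gen_closed)
  have "Suc (t i - 1) = t i" using three_le_t[OF assms] by simp
  then have "rot i [^]\<^bsub>G\<^esub> (t i - 1) \<otimes>\<^bsub>G\<^esub> rot i = \<one>\<^bsub>G\<^esub>"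
    using assms closed by (metis nat_pow_Suc gen_1_mult_gen_power_order)
  moreover have "(gen i \<otimes>\<^bsub>G\<^esub> gen 1) \<otimes>\<^bsub>G\<^esub> rot i = gen i \<otimes>\<^bsub>G\<^esub> (gen 1 \<otimes>\<^bsub>G\<^esub> rot i)"
    using closed by (simp add: m_assoc)
  moreover have "gen 1 \<otimes>\<^bsub>G\<^esub> rot i = gen i"
    using closed by (simp add: gen_mult_self flip: m_assoc)
  ultimately have "rot i [^]\<^bsub>G\<^esub> (t i - 1) \<otimes>\<^bsub>G\<^esub> rot i = (gen i \<otimes>\<^bsub>G\<^esub> gen 1) \<otimes>\<^bsub>G\<^esub> rot i"
    using assms by (simp add: gen_mult_self)
  then show ?thesis using closed by (metis m_closed nat_pow_closed r_cancel)
qed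

lemma gen_mult_dih:
  assumes "i \<in> {2..n}"
  shows "gen i \<otimes>\<^bsub>G\<^esub> dih i e a = (if e then dih i False (t i - 1 + a) else dih i True (Suc a))"
proof -
  have closed: "gen 1 \<in> carrier G" "gen i \<in> carrier G" "rot i [^]\<^bsub>G\<^esub> a \<in> carrier G"
    using assms by (auto simp: gen_1_closed gen_closed)
  show ?thesis
  proof (cases e)
    case True
    then show ?thesis
      using assms closed by (simp add: dih_def nat_pow_mult gen_mult_gen_1 flip: m_assoc)
  next
    case False
    have "rot i [^]\<^bsub>G\<^esub> Suc a = rot i \<otimes>\<^bsub>G\<^esub> rot i [^]\<^bsub>G\<^esub> a"
      using closed by (intro nat_pow_Suc2) simp
    moreover have "i \<in> {1..n}" using assms by simp
    ultimately show ?thesis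
      using False closed by (simp add: dih_def gen_1_mult_rot)
  qed
qed

lemma Wi_subset_cls_lists:
  assumes "i \<in> {1..n}" shows "W i \<subseteq> cls ` lists {1, i}"
proof
  fix x assume "x \<in> W i"
  then show "x \<in> cls ` lists {1, i}"
    unfolding star_Wi_def
  proof (induction rule: generate.induct)
    case one
    show ?case by (auto simp: one_star_group intro: image_eqI[of _ _ "[]"])
  next
    case (incl h)
    then show ?case by (auto simp: gen_eq_cls intro: image_eqI[of _ _ "[1]"] image_eqI[of _ _ "[i]"])
  next
    case (inv h)
    then have "inv\<^bsub>G\<^esub> h = h" using assms by (auto simp: inv_gen)
    with inv show ?case by (auto simp: gen_eq_cls intro: image_eqI[of _ _ "[1]"] image_eqI[of _ _ "[i]"])
  next
    case (eng h1 h2)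
    then obtain u v where "u \<in> lists {1, i}" "v \<in> lists {1, i}" "h1 = cls u" "h2 = cls v" by auto
    moreover have "lists {1, i} \<subseteq> L" using assms by auto
    ultimately have "h1 \<otimes>\<^bsub>G\<^esub> h2 = cls (u @ v)" "u @ v \<in> lists {1, i}"
      using cls_mult[of u v] by auto
    then show ?case by blast
  qed
qed

lemma Wi_eq_dih:
  assumes "i \<in> {2..n}" "x \<in> W i" shows "\<exists>e a. a < t i \<and> x = dih i e a"
proof -
  have i: "i \<in> {1..n}" using assms(1) by simp
  have "\<exists>e a. cls v = dih i e a" if "v \<in> lists {1, i}" for v
    using that
  proof (induction v)
    case Nil
    show ?case by (metis dih_rot_0 one_star_group)
  next
    case (Cons j v)
    then have j: "j = 1 \<or> j = i" and v: "v \<in> lists {1, i}" by auto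
    with Cons.IH obtain e a where "cls v = dih i e a" by auto
    moreover have "[j] \<in> L" "v \<in> L" using i j v by auto
    then have "cls (j # v) = gen j \<otimes>\<^bsub>G\<^esub> cls v" by (simp add: gen_eq_cls cls_mult)
    moreover note j
    ultimately show ?case by (metis gen_1_mult_dih gen_mult_dih[OF assms(1)] i)
  qed
  with Wi_subset_cls_lists[OF i] assms(2) obtain e a where "x = dih i e a" by blast
  moreover have "dih i e a = dih i e (a mod t i)" by (simp add: dih_eq_iff[OF assms(1)])
  moreover have "a mod t i < t i" using three_le_t[OF assms(1)] by simp
  ultimately show ?thesis by blast
qed

lemma gen_1_ne_one: "gen 1 \<noteq> \<one>\<^bsub>G\<^esub>"
  using dih_eq_iff[of 2 True 0 False 0] three_le_n by (simp add: dih_rot_0 dih_refl_0)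

lemma gen_ne_one: "i \<in> {2..n} \<Longrightarrow> gen i \<noteq> \<one>\<^bsub>G\<^esub>"
  using dih_eq_iff[of i True 1 False 0] by (simp add: dih_rot_0 dih_refl_1)

lemma gen_ne_gen_1:
  assumes "i \<in> {2..n}" shows "gen i \<noteq> gen 1"
proof -
  have "\<not> [1 = 0] (mod t i)" using three_le_t[OF assms] by (simp add: cong_def)
  with assms show ?thesis using dih_eq_iff[of i True 1 True 0] by (simp add: dih_refl_0 dih_refl_1)
qed

lemma Wi_inter_Wi_subset:
  assumes "i \<in> {2..n}" "j \<in> {2..n}" "i \<noteq> j"
  shows "W i \<inter> W j \<subseteq> {\<one>\<^bsub>G\<^esub>, gen 1}"
proof
  fix x assume x: "x \<in> W i \<inter> W j"
  then obtain e a where a: "a < t i" "x = dih i e a" using Wi_eq_dih[OF assms(1)] by blast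
  moreover obtain d b where "x = dih j d b" using x Wi_eq_dih[OF assms(2)] by blast
  ultimately have "t i dvd a" using dih_eq_imp_dvd_other[OF assms] by metis
  with a have "x = dih i e 0" by (cases "a = 0") (auto dest: dvd_imp_le)
  then show "x \<in> {\<one>\<^bsub>G\<^esub>, gen 1}" by (cases e) (simp_all add: dih_rot_0 dih_refl_0)
qed

text \<open>Since \<open>t i\<close> is odd, the rotations of \<open>W i\<close> have no square roots of \<open>\<one>\<close> besides \<open>\<one>\<close>.\<close>

lemma involution_in_Wi:
  assumes "i \<in> {2..n}" "x \<in> W i" "x \<otimes>\<^bsub>G\<^esub> x = \<one>\<^bsub>G\<^esub>" "x \<noteq> \<one>\<^bsub>G\<^esub>"
  shows "\<exists>a. a < t i \<and> x = dih i True a"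
proof -
  obtain e a where a: "a < t i" "x = dih i e a" using Wi_eq_dih assms(1,2) by blast
  have "e"
  proof (rule ccontr)
    assume "\<not> e"
    moreover have "rot i \<in> carrier G" using assms(1) by (simp add: rot_closed)
    ultimately have "dih i False (a + a) = dih i False 0"
      using a assms(3) by (simp add: dih_def flip: nat_pow_mult)
    then have "t i dvd 2 * a" using assms(1) by (simp add: dih_eq_iff cong_0_iff mult_2)
    then have "t i dvd a" using odd_t[OF assms(1)] by (simp add: coprime_dvd_mult_right_iff)
    with a \<open>\<not> e\<close> assms(4) show False by (cases "a = 0") (auto simp: dih_rot_0 dest: dvd_imp_le)
  qed
  with a show ?thesis by auto
qed

lemma hom_dih:
  assumes "i \<in> {2..n}" "h \<in> hom G G" "h (gen 1) = gen 1" "h (gen i) = dih i True a"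
  shows "h (dih i e b) = dih i e (a * b)"
proof -
  have i: "i \<in> {1..n}" using assms(1) by simp
  have "h (rot i) = gen 1 \<otimes>\<^bsub>G\<^esub> dih i True a"
    using assms i by (simp add: hom_mult gen_1_closed gen_closed)
  also have "\<dots> = dih i False a" using gen_1_mult_dih[OF i, of True a] by simp
  also have "\<dots> = rot i [^]\<^bsub>G\<^esub> a" by (simp add: dih_def)
  finally have "h (rot i [^]\<^bsub>G\<^esub> b) = rot i [^]\<^bsub>G\<^esub> (a * b)"
    using assms(2) i by (simp add: hom_nat_pow[OF assms(2)] group_star_group nat_pow_pow gen_1_closed gen_closed)
  then show ?thesis
    using assms(2,3) i by (simp add: dih_def hom_mult gen_1_closed gen_closed)
qed

lemma dih_refl_mult_self:
  assumes "i \<in> {1..n}" shows "dih i True a \<otimes>\<^bsub>G\<^esub> dih i True a = \<one>\<^bsub>G\<^esub>"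
proof (induction a)
  case 0
  then show ?case by (simp add: dih_refl_0 gen_mult_self)
next
  case (Suc a)
  have closed: "gen 1 \<in> carrier G" "rot i \<in> carrier G" "rot i [^]\<^bsub>G\<^esub> a \<in> carrier G"
    using assms by (auto simp: gen_1_closed rot_closed)
  have "rot i \<otimes>\<^bsub>G\<^esub> (gen 1 \<otimes>\<^bsub>G\<^esub> rot i) = gen 1"
    using assms by (simp add: m_assoc gen_1_closed gen_closed gen_mult_self flip: m_assoc[of "gen 1" "gen 1"])
  moreover have "rot i [^]\<^bsub>G\<^esub> a \<otimes>\<^bsub>G\<^esub> rot i = rot i \<otimes>\<^bsub>G\<^esub> rot i [^]\<^bsub>G\<^esub> a"
    using closed by (metis nat_pow_Suc nat_pow_Suc2)
  ultimately have "rot i \<otimes>\<^bsub>G\<^esub> (gen 1 \<otimes>\<^bsub>G\<^esub> (rot i [^]\<^bsub>G\<^esub> a \<otimes>\<^bsub>G\<^esub> rot i)) = gen 1 \<otimes>\<^bsub>G\<^esub> rot i [^]\<^bsub>G\<^esub> a"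
    using closed by (simp flip: m_assoc)
  with Suc closed show ?case by (simp add: dih_def m_assoc)
qed

section \<open>The automorphisms \<open>\<theta>\<^sub>i\<^sup>k\<close>\<close>

definition theta :: "nat \<Rightarrow> nat \<Rightarrow> nat list set \<Rightarrow> nat list set" where
  "theta i a = star_lift G (\<lambda>j. if j = i then dih i True a else gen j)"

lemma theta_relations:
  assumes "i \<in> {2..n}"
  shows "satisfies_star_relations G (\<lambda>j. if j = i then dih i True a else gen j)"
  unfolding satisfies_star_relations_def
proof (intro conjI ballI)
  fix j assume j: "j \<in> {1..n}"
  then show "(if j = i then dih i True a else gen j) \<in> carrier G"
    and "(if j = i then dih i True a else gen j) \<otimes>\<^bsub>G\<^esub> (if j = i then dih i True a else gen j) = \<one>\<^bsub>G\<^esub>"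
    by (simp_all add: dih_closed gen_closed dih_refl_mult_self gen_mult_self)
next
  fix j assume j: "j \<in> {2..n}"
  have "gen 1 \<otimes>\<^bsub>G\<^esub> dih i True a = rot i [^]\<^bsub>G\<^esub> a"
    using gen_1_mult_dih[of i True a] assms by (simp add: dih_def)
  moreover have "(rot i [^]\<^bsub>G\<^esub> a) [^]\<^bsub>G\<^esub> t i = \<one>\<^bsub>G\<^esub>"
    using assms rot_power_order[OF assms, of a] by (simp add: rot_closed nat_pow_pow mult.commute)
  ultimately show "((if 1 = i then dih i True a else gen 1) \<otimes>\<^bsub>G\<^esub> (if j = i then dih i True a else gen j))
      [^]\<^bsub>G\<^esub> t j = \<one>\<^bsub>G\<^esub>"
    using assms j by (auto simp: gen_1_mult_gen_power_order)
qed

lemma theta_hom: "i \<in> {2..n} \<Longrightarrow> theta i a \<in> hom G G"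
  by (simp add: theta_def star_lift_hom group_star_group theta_relations)

lemma theta_gen:
  "i \<in> {2..n} \<Longrightarrow> j \<in> {1..n} \<Longrightarrow> theta i a (gen j) = (if j = i then dih i True a else gen j)"
  by (simp add: theta_def star_lift_gen group_star_group theta_relations)

lemma theta_dih: "i \<in> {2..n} \<Longrightarrow> theta i a (dih i e b) = dih i e (a * b)"
  by (rule hom_dih) (auto simp: theta_hom theta_gen)

lemma theta_theta:
  assumes "i \<in> {2..n}" "[a * b = 1] (mod t i)" "x \<in> carrier G"
  shows "theta i a (theta i b x) = x"
proof -
  have "theta i a \<circ> theta i b \<in> hom G G" by (rule Group.hom_compose[OF theta_hom[OF assms(1)] theta_hom[OF assms(1)]])
  moreover have "(\<lambda>x\<in>carrier G. x) \<in> hom G G" using id_in_auto by (simp add: auto_def)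
  moreover have "theta i a (theta i b (gen j)) = gen j" if "j \<in> {1..n}" for j
  proof (cases "j = i")
    case True
    then have "theta i a (theta i b (gen j)) = dih i True (a * b)"
      using assms(1) that by (simp add: theta_gen theta_dih)
    also have "\<dots> = dih i True 1" using assms(1,2) by (simp add: dih_eq_iff)
    finally show ?thesis using True that by (simp add: dih_refl_1)
  qed (use assms(1) that in \<open>simp add: theta_gen\<close>)
  ultimately show ?thesis
    using hom_eq_on_gens[OF group_star_group, of "theta i a \<circ> theta i b" "\<lambda>x\<in>carrier G. x"] assms(3)
    by (simp add: gen_closed)
qed

lemma theta_in_auto:
  assumes "i \<in> {2..n}" "coprime a (t i)" shows "theta i a \<in> auto G"
proof -
  obtain b where b: "[a * b = 1] (mod t i)"
    using cong_solve_coprime_nat[OF assms(2)] by (auto simp: One_nat_def)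
  then have b': "[b * a = 1] (mod t i)" by (simp add: mult.commute)
  have "bij_betw (theta i a) (carrier G) (carrier G)"
  proof (rule bij_betw_byWitness[where f' = "theta i b"])
    show "theta i a ` carrier G \<subseteq> carrier G" "theta i b ` carrier G \<subseteq> carrier G"
      using theta_hom[OF assms(1)] by (auto simp: hom_def)
  qed (use theta_theta[OF assms(1) b] theta_theta[OF assms(1) b'] in auto)
  moreover have "theta i a \<in> extensional (carrier G)" by (simp add: theta_def star_lift_def)
  ultimately show ?thesis using theta_hom[OF assms(1)] by (simp add: auto_def Bij_def)
qed

lemma theta_in_star_thetas:
  assumes "i \<in> {2..n}" "1 \<le> a" "a < t i" "coprime a (t i)"
  shows "theta i a \<in> star_thetas n t"
  unfolding star_thetas_def using assms theta_in_auto theta_gen[OF assms(1)]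
  by (auto simp: dih_def intro!: bexI[of _ i] exI[of _ a])

section \<open>Automorphisms preserving every \<open>W i\<close>\<close>

lemma image_Wi_eq:
  assumes "i \<in> {1..n}" "h \<in> hom G G" "h (gen 1) = gen 1" "h (gen i) \<in> W i" "gen i \<in> h ` W i"
  shows "h ` W i = W i"
proof
  interpret h: group_hom G G h
    using assms(2) by (simp add: group_hom_def group_hom_axioms_def group_star_group)
  have "h ` W i = generate G {gen 1, h (gen i)}"
    unfolding star_Wi_def using h.generate_img[of "{gen 1, gen i}"] assms(1,3)
    by (simp add: gen_1_closed gen_closed)
  also have "\<dots> \<subseteq> W i"
    using assms(1,4) by (intro generate_subgroup_incl subgroup_Wi) (auto simp: gen_1_in_Wi)
  finally show "h ` W i \<subseteq> W i" .
  have "gen 1 \<in> h ` W i" using assms(3) gen_1_in_Wi by (metis imageI)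
  with assms(5) show "W i \<subseteq> h ` W i"
    unfolding star_Wi_def
    by (intro generate_subgroup_incl h.subgroup_img_is_subgroup subgroup_Wi[OF assms(1), unfolded star_Wi_def])
      auto
qed

lemma star_thetas_image_Wi:
  assumes "h \<in> star_thetas n t" "j \<in> {2..n}"
  shows "h ` W j = W j"
proof -
  from assms(1) obtain i k where h: "h \<in> auto G" and i: "i \<in> {2..n}"
    and k: "coprime k (t i)" and fix_gen: "\<forall>j\<in>{1..n}. j \<noteq> i \<longrightarrow> h (gen j) = gen j"
    and h_gen_i: "h (gen i) = dih i True k"
    unfolding star_thetas_def dih_def by auto
  have hom: "h \<in> hom G G" using h by (simp add: auto_def)
  have h_gen_1: "h (gen 1) = gen 1" using fix_gen i by auto
  show ?thesis
  proof (cases "j = i")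
    case True
    obtain b where b: "[k * b = 1] (mod t i)"
      using cong_solve_coprime_nat[OF k] by (auto simp: One_nat_def)
    have "h (dih i True b) = gen i"
      using hom_dih[OF i hom h_gen_1 h_gen_i] b i by (simp add: dih_eq_iff[OF i] dih_refl_1 flip: dih_refl_1)
    moreover have "dih i True b \<in> W i" using i by (simp add: dih_in_Wi)
    ultimately have "gen i \<in> h ` W i" by (metis imageI)
    with i h_gen_i show ?thesis
      using True image_Wi_eq[OF _ hom h_gen_1] by (simp add: dih_in_Wi)
  next
    case False
    then have "h (gen j) = gen j" using fix_gen assms(2) by simp
    moreover from this have "gen j \<in> h ` W j" using gen_in_Wi by (metis imageI)
    ultimately show ?thesis using assms(2) image_Wi_eq[OF _ hom h_gen_1] gen_in_Wi by simp
  qed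
qed

lemma star_C_subset_auto: "star_C n t \<subseteq> auto G"
  unfolding star_C_def
  using group.generate_incl[OF AutoGroup, of "star_thetas n t"]
  by (auto simp: star_thetas_def AutoGroup_def BijGroup_def)

lemma star_C_image_Wi:
  assumes "h \<in> star_C n t" "i \<in> {2..n}"
  shows "h ` W i = W i"
proof -
  have "star_thetas n t \<subseteq> {h \<in> auto G. h ` W i = W i}"
    using star_thetas_image_Wi[OF _ assms(2)] by (auto simp: star_thetas_def)
  moreover have "W i \<subseteq> carrier G" using assms(2) subgroup_Wi[of i] by (simp add: subgroup.subset)
  ultimately have "star_C n t \<subseteq> {h \<in> auto G. h ` W i = W i}"
    unfolding star_C_def
    by (intro group.generate_subgroup_incl[OF AutoGroup] subgroup_auto_stabilizer)
  with assms(1) show ?thesis by blast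
qed

lemma auto_eqI:
  assumes "h \<in> auto G" "h' \<in> auto G" "\<forall>j\<in>{1..n}. h (gen j) = h' (gen j)"
  shows "h = h'"
proof (rule extensionalityI[of _ "carrier G"])
  show "h \<in> extensional (carrier G)" "h' \<in> extensional (carrier G)"
    using assms(1,2) by (simp_all add: auto_def Bij_def)
  show "h x = h' x" if "x \<in> carrier G" for x
    using hom_eq_on_gens[OF group_star_group _ _ assms(3) that] assms(1,2) by (simp add: auto_def)
qed

context
  fixes \<theta> :: "nat list set \<Rightarrow> nat list set"
  assumes auto: "\<theta> \<in> auto G" and image_Wi: "\<forall>i\<in>{2..n}. \<theta> ` W i = W i"
begin

lemma preserving_hom: "\<theta> \<in> hom G G"
  using auto by (simp add: auto_def)

lemma preserving_inj: "inj_on \<theta> (carrier G)"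
  using auto by (simp add: auto_def Bij_def bij_betw_def)

lemma preserving_eq_one_iff: "x \<in> carrier G \<Longrightarrow> \<theta> x = \<one>\<^bsub>G\<^esub> \<longleftrightarrow> x = \<one>\<^bsub>G\<^esub>"
  using inj_onD[OF preserving_inj, of x "\<one>\<^bsub>G\<^esub>"] hom_one[OF preserving_hom group_star_group group_star_group] by auto

lemma preserving_gen_1: "\<theta> (gen 1) = gen 1"
proof -
  have "2 \<in> {2..n}" "3 \<in> {2..n}" using three_le_n by auto
  then have "\<theta> (gen 1) \<in> W 2 \<inter> W 3" using image_Wi gen_1_in_Wi by blast
  with Wi_inter_Wi_subset[of 2 3] three_le_n have "\<theta> (gen 1) \<in> {\<one>\<^bsub>G\<^esub>, gen 1}" by auto
  then show ?thesis using preserving_eq_one_iff gen_1_closed gen_1_ne_one by auto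
qed

lemma preserving_gen_eq_dih:
  assumes i: "i \<in> {2..n}"
  shows "\<exists>a. 1 \<le> a \<and> a < t i \<and> coprime a (t i) \<and> \<theta> (gen i) = dih i True a"
proof -
  have closed: "gen i \<in> carrier G" using i by (simp add: gen_closed)
  have "\<theta> (gen i) \<in> W i" using image_Wi i gen_in_Wi by blast
  moreover have "\<theta> (gen i) \<otimes>\<^bsub>G\<^esub> \<theta> (gen i) = \<one>\<^bsub>G\<^esub>"
    using i closed preserving_eq_one_iff by (simp flip: hom_mult[OF preserving_hom] add: gen_mult_self)
  moreover have "\<theta> (gen i) \<noteq> \<one>\<^bsub>G\<^esub>" using preserving_eq_one_iff closed gen_ne_one i by simp
  ultimately obtain a where a: "a < t i" "\<theta> (gen i) = dih i True a"
    using involution_in_Wi[OF i] by blast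
  have "a \<noteq> 0"
  proof
    assume "a = 0"
    then have "\<theta> (gen i) = \<theta> (gen 1)" using a preserving_gen_1 by (simp add: dih_refl_0)
    then show False using inj_onD[OF preserving_inj] closed gen_1_closed gen_ne_gen_1[OF i] by blast
  qed
  then have "1 \<le> a" by linarith
  have "gen i \<in> \<theta> ` W i" using image_Wi i gen_in_Wi by blast
  then obtain y where "y \<in> W i" "gen i = \<theta> y" by blast
  moreover from this obtain d b where "y = dih i d b" using Wi_eq_dih[OF i] by blast
  ultimately have "dih i True 1 = dih i d (a * b)"
    using hom_dih[OF i preserving_hom preserving_gen_1 a(2)] i by (simp add: dih_refl_1)
  then have "[a * b = 1] (mod t i)" using i by (simp add: dih_eq_iff cong_sym_eq)
  then have "coprime a (t i)" using coprime_iff_invertible_nat by (auto simp: One_nat_def)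
  with a \<open>1 \<le> a\<close> show ?thesis by blast
qed

lemma preserving_agrees_with_star_C:
  assumes "finite S" "S \<subseteq> {2..n}"
  shows "\<exists>\<psi>\<in>star_C n t. \<forall>j\<in>{1..n}. \<psi> (gen j) = (if j \<in> S then \<theta> (gen j) else gen j)"
  using assms
proof (induction S rule: finite_induct)
  case empty
  have "\<one>\<^bsub>AutoGroup G\<^esub> \<in> star_C n t" unfolding star_C_def by (rule generate.one)
  moreover have "\<forall>j\<in>{1..n}. \<one>\<^bsub>AutoGroup G\<^esub> (gen j) = gen j"
    by (simp add: AutoGroup_def BijGroup_def gen_closed)
  ultimately show ?case by auto
next
  case (insert i S)
  then obtain \<psi> where \<psi>: "\<psi> \<in> star_C n t" "\<forall>j\<in>{1..n}. \<psi> (gen j) = (if j \<in> S then \<theta> (gen j) else gen j)"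
    by auto
  have i: "i \<in> {2..n}" "i \<in> {1..n}" "i \<notin> S" and S: "1 \<notin> S" using insert by auto
  obtain a where a: "1 \<le> a" "a < t i" "coprime a (t i)" "\<theta> (gen i) = dih i True a"
    using preserving_gen_eq_dih[OF i(1)] by blast
  have theta_C: "theta i a \<in> star_C n t"
    unfolding star_C_def by (rule generate.incl) (use theta_in_star_thetas[OF i(1) a(1-3)] in simp)
  have \<psi>_hom: "\<psi> \<in> hom G G" using \<psi>(1) star_C_subset_auto by (auto simp: auto_def)
  have \<psi>_gen: "\<psi> (gen 1) = gen 1" "\<psi> (gen i) = dih i True 1" using \<psi>(2) i S by (auto simp: dih_refl_1)
  have "\<psi> \<otimes>\<^bsub>AutoGroup G\<^esub> theta i a \<in> star_C n t"
    unfolding star_C_def by (rule generate.eng) (use \<psi>(1) theta_C in \<open>simp_all add: star_C_def\<close>)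
  moreover have "\<psi> \<otimes>\<^bsub>AutoGroup G\<^esub> theta i a = compose (carrier G) \<psi> (theta i a)"
    using \<psi>(1) theta_C star_C_subset_auto by (auto simp: AutoGroup_def BijGroup_def auto_def)
  moreover have "\<psi> (theta i a (gen j)) = (if j \<in> insert i S then \<theta> (gen j) else gen j)"
    if "j \<in> {1..n}" for j
    using that \<psi>(2) i a(4) hom_dih[OF i(1) \<psi>_hom \<psi>_gen, of True a] by (simp add: theta_gen)
  ultimately show ?case
    by (intro bexI[of _ "\<psi> \<otimes>\<^bsub>AutoGroup G\<^esub> theta i a"]) (simp_all add: compose_def gen_closed)
qed

lemma preserving_in_star_C: "\<theta> \<in> star_C n t"
proof -
  obtain \<psi> where \<psi>: "\<psi> \<in> star_C n t" "\<forall>j\<in>{1..n}. \<psi> (gen j) = (if j \<in> {2..n} then \<theta> (gen j) else gen j)"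
    using preserving_agrees_with_star_C[of "{2..n}"] by auto
  moreover have "j = 1 \<or> j \<in> {2..n}" if "j \<in> {1..n}" for j using that by auto
  ultimately have "\<forall>j\<in>{1..n}. \<psi> (gen j) = \<theta> (gen j)" using preserving_gen_1 by fastforce
  then have "\<psi> = \<theta>" using auto_eqI \<psi>(1) star_C_subset_auto auto by blast
  with \<psi>(1) show ?thesis by simp
qed

end

theorem star_C_iff_image_Wi:
  assumes "\<theta> \<in> auto G" shows "\<theta> \<in> star_C n t \<longleftrightarrow> (\<forall>i\<in>{2..n}. \<theta> ` W i = W i)"
  using star_C_image_Wi preserving_in_star_C[OF assms] by blast

end

lemma block_containing:
  fixes k :: "nat \<Rightarrow> nat"
  assumes "(\<Sum>j=1..l. k j) = n - 1" "i \<in> {2..n}"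
  shows "\<exists>j\<in>{1..l}. (\<Sum>r=1..<j. k r) + 2 \<le> i \<and> i \<le> (\<Sum>r=1..j. k r) + 1"
proof -
  define P where "P j \<longleftrightarrow> i \<le> (\<Sum>r=1..j. k r) + 1" for j
  have "P l" using assms by (auto simp: P_def)
  define j where "j = (LEAST j. P j)"
  have "P j" "j \<le> l" unfolding j_def using \<open>P l\<close> by (auto intro: LeastI Least_le)
  moreover have "j \<noteq> 0"
  proof
    assume "j = 0"
    with \<open>P j\<close> assms(2) show False by (simp add: P_def)
  qed
  then obtain j' where j': "j = Suc j'" by (cases j) auto
  then have "\<not> P j'" using not_less_Least[of j' P] by (simp add: j_def)
  moreover have "{1..<j} = {1..j'}" using j' by auto
  ultimately show ?thesis using j' by (auto simp: P_def intro!: bexI[of _ j])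
qed

theorem lemma3p3:
  fixes n l :: nat and m k t :: "nat \<Rightarrow> nat" and \<theta> :: "nat list set \<Rightarrow> nat list set"
  assumes "n \<ge> 3"
    and "\<forall>j\<in>{1..l}. odd (m j) \<and> m j \<ge> 3 \<and> k j \<ge> 1"
    and "inj_on m {1..l}"
    and "(\<Sum>j=1..l. k j) = n - 1"
    and "\<forall>j\<in>{1..l}. \<forall>i. (\<Sum>r=1..<j. k r) + 2 \<le> i \<and> i \<le> (\<Sum>r=1..j. k r) + 1 \<longrightarrow> t i = m j"
    and "\<theta> \<in> auto (star_group n t)"
  shows "\<theta> \<in> star_C n t \<longleftrightarrow> (\<forall>i\<in>{2..n}. \<theta> ` star_Wi n t i = star_Wi n t i)"
proof -
  \<comment> \<open>The block data only serve to make each \<open>t i\<close> odd and at least 3.\<close>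
  have "odd (t i) \<and> 3 \<le> t i" if i: "i \<in> {2..n}" for i
  proof -
    obtain j where "j \<in> {1..l}" "(\<Sum>r=1..<j. k r) + 2 \<le> i" "i \<le> (\<Sum>r=1..j. k r) + 1"
      using block_containing[OF assms(4) i] by blast
    with assms(2,5) show ?thesis by auto
  qed
  then interpret odd_star_presentation n t
    by unfold_locales (use assms(1) in auto)
  show ?thesis by (rule star_C_iff_image_Wi[OF assms(6)])
qed

end
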